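(* Let $\mathcal C$ be a pointed category with finite coproducts, $X,Y\in\mathcal C$, $A$ an abelian group, and $\varphi\colon\mathcal C(X,Y)\to A$ a function with $\varphi(0)=0$. Let $\bar\varphi\colon U_X(Y)\to A$ be its $\mathbb Z$-linear extension. Then $\varphi$ is quadratic if and only if $\bar\varphi$ factors through $t_2\colon U_X(Y)\to T_2U_X(Y)$.
   Context: Notation. $\vee$ is the coproduct, $r_1,r_2\colon Y\vee Y\to Y$ are the retractions, and $\nabla$ is the folding map. Functors. - $U_X\colon\mathcal C\to Ab$, $U_X(Z)=\mathbb Z[\mathcal C(X,Z)]/\mathbb Z\cdot0$, functorial by postcomposition. - For a reduced functor $F$: $cr_2F(Y,Y)=\ker(F(Y\vee Y)\to F(Y)\oplus F(Y))$, and $cr_3F(Y,Y,Y)=cr_2(cr_2F(-,Y))(Y,Y)$. - $T_2F(Y)=\mathrm{coker}(cr_3F(Y,Y,Y)\subseteq F(Y^{\vee3})\xrightarrow{F(\nabla^3)}F(Y))$, with projection $t_2$. - For a bireduced bifunctor $B$, $T_{11}B$ is the quotient of $B(Y,Y)$ by the images of $cr_2(B(-,Y))(Y,Y)$ under $B(\nabla,1)$ and of $cr_2(B(Y,-))(Y,Y)$ under $B(1,\nabla)$; $t_{11}$ is the projection. Quadratic maps. - The cross-effect $cr_2(\varphi)\colon cr_2U_X(Y,Y)\to A$ is the restriction to $cr_2U_X(Y,Y)\subseteq U_X(Y\vee Y)$ of the homomorphism determined by $\xi\mapsto\varphi(\nabla\xi)-\varphi(r_1\xi)-\varphi(r_2\xi)$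 for $\xi\in\mathcal C(X,Y\vee Y)$. - $\varphi$ is called quadratic if $cr_2(\varphi)$ factors through $t_{11}\colon cr_2U_X(Y,Y)\to T_{11}(cr_2U_X)(Y,Y)$. *)

theory Defs
  imports Main "HOL-Library.Function_Algebras"
begin

text \<open>Objects are the elements of type 'o, morphisms the elements of type 'm.
 Comp g f denotes g \<circ> f (defined when Dom g = Cod f).\<close>

record ('o, 'm) pcat =
  Dom  :: "'m \<Rightarrow> 'o"
  Cod  :: "'m \<Rightarrow> 'o"
  Comp :: "'m \<Rightarrow> 'm \<Rightarrow> 'm"
  Ident :: "'o \<Rightarrow> 'm"
  Zero :: "'o"
  Cop  :: "'o \<Rightarrow> 'o \<Rightarrow> 'o"
  In1  :: "'o \<Rightarrow> 'o \<Rightarrow> 'm"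
  In2  :: "'o \<Rightarrow> 'o \<Rightarrow> 'm"

definition hom :: "('o,'m) pcat \<Rightarrow> 'o \<Rightarrow> 'o \<Rightarrow> 'm set" where
  "hom C a b = {f. Dom C f = a \<and> Cod C f = b}"

definition pointed_cat_cop :: "('o,'m) pcat \<Rightarrow> bool" where
  "pointed_cat_cop C \<longleftrightarrow>
     (\<forall>f g. Dom C g = Cod C f \<longrightarrow>
        Dom C (Comp C g f) = Dom C f \<and> Cod C (Comp C g f) = Cod C g)
   \<and> (\<forall>f g h. Dom C g = Cod C f \<longrightarrow> Dom C h = Cod C g \<longrightarrow>
        Comp C h (Comp C g f) = Comp C (Comp C h g) f)
   \<and> (\<forall>a. Ident C a \<in> hom C a a)
   \<and> (\<forall>f. Comp C f (Ident C (Dom C f)) = f \<and> Comp C (Ident C (Cod C f)) f = f)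
   \<and> (\<forall>a. \<exists>!f. f \<in> hom C (Zero C) a)
   \<and> (\<forall>a. \<exists>!f. f \<in> hom C a (Zero C))
   \<and> (\<forall>a b. In1 C a b \<in> hom C a (Cop C a b) \<and> In2 C a b \<in> hom C b (Cop C a b))
   \<and> (\<forall>a b c f g. f \<in> hom C a c \<longrightarrow> g \<in> hom C b c \<longrightarrow>
        (\<exists>!h. h \<in> hom C (Cop C a b) c \<and> Comp C h (In1 C a b) = f \<and> Comp C h (In2 C a b) = g))"

definition zmor :: "('o,'m) pcat \<Rightarrow> 'o \<Rightarrow> 'o \<Rightarrow> 'm" where
  "zmor C a b = Comp C (THE h. h \<in> hom C (Zero C) b) (THE g. g \<in> hom C a (Zero C))"

definition copair :: "('o,'m) pcat \<Rightarrow> 'm \<Rightarrow> 'm \<Rightarrow> 'm" where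
  "copair C f g = (THE h. h \<in> hom C (Cop C (Dom C f) (Dom C g)) (Cod C f)
      \<and> Comp C h (In1 C (Dom C f) (Dom C g)) = f \<and> Comp C h (In2 C (Dom C f) (Dom C g)) = g)"

definition cmap :: "('o,'m) pcat \<Rightarrow> 'm \<Rightarrow> 'm \<Rightarrow> 'm" where
  "cmap C f g = copair C (Comp C (In1 C (Cod C f) (Cod C g)) f) (Comp C (In2 C (Cod C f) (Cod C g)) g)"

definition ret1 :: "('o,'m) pcat \<Rightarrow> 'o \<Rightarrow> 'o \<Rightarrow> 'm" where
  "ret1 C a b = copair C (Ident C a) (zmor C b a)"
definition ret2 :: "('o,'m) pcat \<Rightarrow> 'o \<Rightarrow> 'o \<Rightarrow> 'm" where
  "ret2 C a b = copair C (zmor C a b) (Ident C b)"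
definition fold2 :: "('o,'m) pcat \<Rightarrow> 'o \<Rightarrow> 'm" where
  "fold2 C Y = copair C (Ident C Y) (Ident C Y)"
definition fold3 :: "('o,'m) pcat \<Rightarrow> 'o \<Rightarrow> 'm" where
  "fold3 C Y = copair C (fold2 C Y) (Ident C Y)"

text \<open>U_X(Z) = Z[C(X,Z)] / Z\<cdot>0, represented by its canonical representatives:
 finitely supported integer functions on C(X,Z) - {0}.\<close>
definition UX :: "('o,'m) pcat \<Rightarrow> 'o \<Rightarrow> 'o \<Rightarrow> ('m \<Rightarrow> int) set" where
  "UX C X Z = {u. finite {f. u f \<noteq> 0} \<and>
      (\<forall>f. u f \<noteq> 0 \<longrightarrow> f \<in> hom C X Z \<and> f \<noteq> zmor C X Z)}"

text \<open>U_X(f) for f : Z \<rightarrow> W (postcomposition, then discarding the class of 0).\<close>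
definition Umap :: "('o,'m) pcat \<Rightarrow> 'o \<Rightarrow> 'm \<Rightarrow> ('m \<Rightarrow> int) \<Rightarrow> ('m \<Rightarrow> int)" where
  "Umap C X f u = (\<lambda>g. if g \<in> hom C X (Cod C f) \<and> g \<noteq> zmor C X (Cod C f)
       then (\<Sum>h\<in>{h. u h \<noteq> 0 \<and> Comp C f h = g}. u h) else 0)"

definition cr2U :: "('o,'m) pcat \<Rightarrow> 'o \<Rightarrow> 'o \<Rightarrow> ('m \<Rightarrow> int) set" where
  "cr2U C X Y = {u \<in> UX C X (Cop C Y Y).
      Umap C X (ret1 C Y Y) u = 0 \<and> Umap C X (ret2 C Y Y) u = 0}"

text \<open>cr_3 U_X(Y,Y,Y) = cr_2(cr_2 U_X(-,Y))(Y,Y) \<subseteq> U_X((Y \<or> Y) \<or> Y) = U_X(Y^{\<or>3}).\<close>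
definition cr3U :: "('o,'m) pcat \<Rightarrow> 'o \<Rightarrow> 'o \<Rightarrow> ('m \<Rightarrow> int) set" where
  "cr3U C X Y = {u \<in> UX C X (Cop C (Cop C Y Y) Y).
      Umap C X (ret1 C (Cop C Y Y) Y) u = 0 \<and> Umap C X (ret2 C (Cop C Y Y) Y) u = 0 \<and>
      Umap C X (cmap C (ret1 C Y Y) (Ident C Y)) u = 0 \<and>
      Umap C X (cmap C (ret2 C Y Y) (Ident C Y)) u = 0}"

text \<open>cr_2(cr_2 U_X(Y,-))(Y,Y) \<subseteq> U_X(Y \<or> (Y \<or> Y)).\<close>
definition cr3U_right :: "('o,'m) pcat \<Rightarrow> 'o \<Rightarrow> 'o \<Rightarrow> ('m \<Rightarrow> int) set" where
  "cr3U_right C X Y = {u \<in> UX C X (Cop C Y (Cop C Y Y)).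
      Umap C X (ret1 C Y (Cop C Y Y)) u = 0 \<and> Umap C X (ret2 C Y (Cop C Y Y)) u = 0 \<and>
      Umap C X (cmap C (Ident C Y) (ret1 C Y Y)) u = 0 \<and>
      Umap C X (cmap C (Ident C Y) (ret2 C Y Y)) u = 0}"

definition qclass :: "'b::ab_group_add set \<Rightarrow> 'b set \<Rightarrow> 'b \<Rightarrow> 'b set" where
  "qclass G N u = {v \<in> G. u - v \<in> N}"

definition factors_through_quot ::
    "'b::ab_group_add set \<Rightarrow> 'b set \<Rightarrow> ('b \<Rightarrow> 'a::ab_group_add) \<Rightarrow> bool" where
  "factors_through_quot G N h \<longleftrightarrow> (\<exists>\<psi>.
      (\<forall>u\<in>G. \<psi> (qclass G N u) = h u) \<and>
      (\<forall>u\<in>G. \<forall>v\<in>G. \<psi> (qclass G N (u + v)) = \<psi> (qclass G N u) + \<psi> (qclass G N v)))"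

text \<open>Kernel of t_2 : U_X(Y) \<rightarrow> T_2 U_X(Y): image of cr_3 U_X(Y,Y,Y) under U_X(\<nabla>^3).\<close>
definition T2ker :: "('o,'m) pcat \<Rightarrow> 'o \<Rightarrow> 'o \<Rightarrow> ('m \<Rightarrow> int) set" where
  "T2ker C X Y = Umap C X (fold3 C Y) ` cr3U C X Y"

text \<open>Kernel of t_11 : cr_2U_X(Y,Y) \<rightarrow> T_11(cr_2U_X)(Y,Y): subgroup generated by the images
 of cr_2(B(-,Y))(Y,Y) under B(\<nabla>,1) and of cr_2(B(Y,-))(Y,Y) under B(1,\<nabla>)
 (a sum of two subgroups).\<close>
definition T11ker :: "('o,'m) pcat \<Rightarrow> 'o \<Rightarrow> 'o \<Rightarrow> ('m \<Rightarrow> int) set" where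
  "T11ker C X Y = {a + b | a b.
      a \<in> Umap C X (cmap C (fold2 C Y) (Ident C Y)) ` cr3U C X Y \<and>
      b \<in> Umap C X (cmap C (Ident C Y) (fold2 C Y)) ` cr3U_right C X Y}"

definition zsmul :: "int \<Rightarrow> 'a::ab_group_add \<Rightarrow> 'a" where
  "zsmul k a = (\<Sum>i<nat k. a) - (\<Sum>i<nat (- k). a)"

definition linext :: "('o,'m) pcat \<Rightarrow> 'o \<Rightarrow> 'o \<Rightarrow> ('m \<Rightarrow> 'a::ab_group_add) \<Rightarrow> ('m \<Rightarrow> int) \<Rightarrow> 'a" where
  "linext C X Y \<phi> u = (\<Sum>f\<in>{f. u f \<noteq> 0}. zsmul (u f) (\<phi> f))"

text \<open>cr_2(\<phi>): homomorphism U_X(Y \<or> Y) \<rightarrow> A, \<xi> \<mapsto> \<phi>(\<nabla>\<xi>) - \<phi>(r_1\<xi>) - \<phi>(r_2\<xi>)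
 (to be restricted to cr_2U_X(Y,Y)).\<close>
definition cr2phi :: "('o,'m) pcat \<Rightarrow> 'o \<Rightarrow> 'o \<Rightarrow> ('m \<Rightarrow> 'a::ab_group_add) \<Rightarrow> ('m \<Rightarrow> int) \<Rightarrow> 'a" where
  "cr2phi C X Y \<phi> u = (\<Sum>\<xi>\<in>{\<xi>. u \<xi> \<noteq> 0}. zsmul (u \<xi>)
      (\<phi> (Comp C (fold2 C Y) \<xi>) - \<phi> (Comp C (ret1 C Y Y) \<xi>) - \<phi> (Comp C (ret2 C Y Y) \<xi>)))"

definition quadratic :: "('o,'m) pcat \<Rightarrow> 'o \<Rightarrow> 'o \<Rightarrow> ('m \<Rightarrow> 'a::ab_group_add) \<Rightarrow> bool" where
  "quadratic C X Y \<phi> \<longleftrightarrow> factors_through_quot (cr2U C X Y) (T11ker C X Y) (cr2phi C X Y \<phi>)"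

end

theory Submission
  imports Defs
begin

text \<open>Write \<open>\<Phi>\<close> for the linear extension of \<open>\<phi>\<close>. On the cross effect \<open>cr\<^sub>2U\<^sub>X(Y,Y)\<close> both
  \<open>U\<^sub>X(r\<^sub>1)\<close> and \<open>U\<^sub>X(r\<^sub>2)\<close> vanish, so there \<open>cr\<^sub>2(\<phi>) = \<Phi> \<circ> U\<^sub>X(\<nabla>)\<close>. Hence \<open>\<phi>\<close> is
  quadratic iff \<open>\<Phi>\<close> vanishes on the image of \<open>ker t\<^sub>1\<^sub>1\<close> under \<open>U\<^sub>X(\<nabla>)\<close>, and it remains to see
  that this image is \<open>ker t\<^sub>2\<close>. This follows from functoriality of \<open>U\<^sub>X\<close> and the identities
  \<open>\<nabla>(\<nabla> \<or> 1) = \<nabla>\<^sup>3\<close> and \<open>\<nabla>(1 \<or> \<nabla>) = \<nabla>\<^sup>3\<alpha>\<close>, where the associativity isomorphism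
  \<open>\<alpha> : Y \<or> (Y \<or> Y) \<rightarrow> (Y \<or> Y) \<or> Y\<close> carries \<open>cr\<^sub>2(cr\<^sub>2U\<^sub>X(Y,-))(Y,Y)\<close> into \<open>cr\<^sub>3U\<^sub>X(Y,Y,Y)\<close>.\<close>

section \<open>Subgroups, additive maps and quotients\<close>

definition add_subgroup :: "'a::ab_group_add set \<Rightarrow> bool" where
  "add_subgroup S \<longleftrightarrow> 0 \<in> S \<and> (\<forall>x\<in>S. \<forall>y\<in>S. x + y \<in> S) \<and> (\<forall>x\<in>S. - x \<in> S)"

definition additive_on :: "'a::ab_group_add set \<Rightarrow> ('a \<Rightarrow> 'b::ab_group_add) \<Rightarrow> bool" where
  "additive_on G f \<longleftrightarrow> (\<forall>u\<in>G. \<forall>v\<in>G. f (u + v) = f u + f v)"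

lemma add_subgroupD:
  assumes "add_subgroup S"
  shows add_subgroup_zero: "0 \<in> S"
    and add_subgroup_add: "x \<in> S \<Longrightarrow> y \<in> S \<Longrightarrow> x + y \<in> S"
    and add_subgroup_uminus: "x \<in> S \<Longrightarrow> - x \<in> S"
  using assms unfolding add_subgroup_def by blast+

lemma add_subgroup_diff: "add_subgroup S \<Longrightarrow> x \<in> S \<Longrightarrow> y \<in> S \<Longrightarrow> x - y \<in> S"
  using add_subgroup_add[of S x "- y"] add_subgroup_uminus[of S y] by simp

lemma additive_onD: "additive_on G f \<Longrightarrow> u \<in> G \<Longrightarrow> v \<in> G \<Longrightarrow> f (u + v) = f u + f v"
  unfolding additive_on_def by blast

lemma additive_on_subset: "additive_on G f \<Longrightarrow> H \<subseteq> G \<Longrightarrow> additive_on H f"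
  unfolding additive_on_def by blast

lemma additive_on_zero:
  assumes "add_subgroup G" and "additive_on G f"
  shows "f 0 = 0"
  using additive_onD[OF assms(2), of 0 0] add_subgroup_zero[OF assms(1)] by simp

lemma additive_on_uminus:
  assumes G: "add_subgroup G" and f: "additive_on G f" and u: "u \<in> G"
  shows "f (- u) = - f u"
proof -
  have "f u + f (- u) = f 0"
    using additive_onD[OF f u add_subgroup_uminus[OF G u]] by simp
  then show ?thesis using additive_on_zero[OF G f] by (simp add: eq_neg_iff_add_eq_0 add.commute)
qed

lemma add_subgroup_image:
  assumes S: "add_subgroup S" and f: "additive_on S f"
  shows "add_subgroup (f ` S)"
  unfolding add_subgroup_def
proof (intro conjI ballI)
  show "0 \<in> f ` S"
    using additive_on_zero[OF S f] add_subgroup_zero[OF S] by (metis image_eqI)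
next
  fix x y assume "x \<in> f ` S" "y \<in> f ` S"
  then obtain a b where "a \<in> S" "b \<in> S" "x = f a" "y = f b" by blast
  then show "x + y \<in> f ` S"
    using additive_onD[OF f] add_subgroup_add[OF S] by (metis image_eqI)
next
  fix x assume "x \<in> f ` S"
  then obtain a where "a \<in> S" "x = f a" by blast
  then show "- x \<in> f ` S"
    using additive_on_uminus[OF S f] add_subgroup_uminus[OF S] by (metis image_eqI)
qed

lemma add_subgroup_sums:
  assumes A: "add_subgroup A" and B: "add_subgroup B"
  shows "add_subgroup {a + b | a b. a \<in> A \<and> b \<in> B}"
  unfolding add_subgroup_def
proof (intro conjI ballI)
  show "0 \<in> {a + b | a b. a \<in> A \<and> b \<in> B}"
    using add_subgroup_zero[OF A] add_subgroup_zero[OF B] by force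
next
  fix x y assume "x \<in> {a + b | a b. a \<in> A \<and> b \<in> B}" "y \<in> {a + b | a b. a \<in> A \<and> b \<in> B}"
  then obtain a b a' b' where "x = a + b" "y = a' + b'" "a \<in> A" "b \<in> B" "a' \<in> A" "b' \<in> B"
    by blast
  moreover have "x + y = (a + a') + (b + b')" using calculation by (simp add: algebra_simps)
  ultimately show "x + y \<in> {a + b | a b. a \<in> A \<and> b \<in> B}"
    using add_subgroup_add[OF A] add_subgroup_add[OF B] by blast
next
  fix x assume "x \<in> {a + b | a b. a \<in> A \<and> b \<in> B}"
  then obtain a b where "x = a + b" "a \<in> A" "b \<in> B" by blast
  moreover have "- x = - a + - b" using calculation by simp
  ultimately show "- x \<in> {a + b | a b. a \<in> A \<and> b \<in> B}"
    using add_subgroup_uminus[OF A] add_subgroup_uminus[OF B] by blast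
qed

lemma add_subgroup_common_kernel:
  assumes G: "add_subgroup G" and F: "\<And>f. f \<in> F \<Longrightarrow> additive_on G f"
  shows "add_subgroup {u \<in> G. \<forall>f\<in>F. f u = 0}"
  using add_subgroupD[OF G]
  by (auto simp: add_subgroup_def additive_onD[OF F] additive_on_zero[OF G F] additive_on_uminus[OF G F])

lemma factors_through_quot_iff_vanishing:
  assumes G: "add_subgroup G" and N: "add_subgroup N" and "N \<subseteq> G"
    and h: "additive_on G h"
  shows "factors_through_quot G N h \<longleftrightarrow> (\<forall>n\<in>N. h n = 0)"
proof
  assume "factors_through_quot G N h"
  then obtain \<psi> where \<psi>: "\<forall>u\<in>G. \<psi> (qclass G N u) = h u"
    unfolding factors_through_quot_def by blast
  show "\<forall>n\<in>N. h n = 0"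
  proof
    fix n assume n: "n \<in> N"
    have "n - v \<in> N \<longleftrightarrow> 0 - v \<in> N" for v
      using add_subgroup_diff[OF N _ n, of "n - v"] add_subgroup_add[OF N n, of "0 - v"] by auto
    then have "qclass G N n = qclass G N 0" unfolding qclass_def by blast
    then show "h n = 0"
      using \<psi> n \<open>N \<subseteq> G\<close> add_subgroup_zero[OF G] additive_on_zero[OF G h] by (metis subsetD)
  qed
next
  assume vanish: "\<forall>n\<in>N. h n = 0"
  define \<psi> where "\<psi> S = h (SOME v. v \<in> S)" for S
  have \<psi>_qclass: "\<psi> (qclass G N u) = h u" if u: "u \<in> G" for u
  proof -
    have "u \<in> qclass G N u" using u add_subgroup_zero[OF N] unfolding qclass_def by simp
    then have "(SOME v. v \<in> qclass G N u) \<in> qclass G N u" by (rule someI)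
    then obtain v where v: "v = (SOME v. v \<in> qclass G N u)" "v \<in> G" "u - v \<in> N"
      unfolding qclass_def by blast
    have "h u = h (v + (u - v))" by simp
    also have "\<dots> = h v + h (u - v)" using additive_onD[OF h] v \<open>N \<subseteq> G\<close> by blast
    also have "\<dots> = h v" using v vanish by simp
    finally show ?thesis using v unfolding \<psi>_def by simp
  qed
  show "factors_through_quot G N h"
    unfolding factors_through_quot_def
    using \<psi>_qclass additive_onD[OF h] add_subgroup_add[OF G] by (intro exI[of _ \<psi>]) simp
qed

section \<open>Integer linear combinations\<close>

lemma zsmul_0 [simp]: "zsmul 0 a = 0"
  by (simp add: zsmul_def)

lemma zsmul_zero [simp]: "zsmul k 0 = 0"
  by (simp add: zsmul_def)

lemma zsmul_diff_right: "zsmul k (a - b) = zsmul k a - zsmul k b"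
  by (simp add: zsmul_def sum_subtractf algebra_simps)

lemma zsmul_add_one_left: "zsmul (k + 1) a = zsmul k a + a"
proof (cases "k \<ge> 0")
  case True
  then have "nat (k + 1) = Suc (nat k)" "nat (- (k + 1)) = 0" "nat (- k) = 0" by auto
  then show ?thesis by (simp add: zsmul_def)
next
  case False
  then have "nat (- k) = Suc (nat (- (k + 1)))" "nat (k + 1) = 0" "nat k = 0" by auto
  then show ?thesis by (simp add: zsmul_def)
qed

lemma zsmul_add_left: "zsmul (k + l) a = zsmul k a + zsmul l a"
proof (induction l rule: int_induct[where k = 0])
  case (step1 i)
  then show ?case
    using zsmul_add_one_left[of "k + i" a] zsmul_add_one_left[of i a] by (simp add: algebra_simps)
next
  case (step2 i)
  then show ?case
    using zsmul_add_one_left[of "k + (i - 1)" a] zsmul_add_one_left[of "i - 1" a]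
    by (simp add: algebra_simps)
qed simp

lemma zsmul_sum_left: "zsmul (\<Sum>x\<in>S. f x) a = (\<Sum>x\<in>S. zsmul (f x) a)"
  by (induction S rule: infinite_finite_induct) (auto simp: zsmul_add_left)

lemma zsmul_one_int: "zsmul k (1::int) = k"
proof (induction k rule: int_induct[where k = 0])
  case (step2 i)
  then show ?case using zsmul_add_one_left[of "i - 1" "1::int"] by simp
qed (simp_all add: zsmul_add_one_left)

definition lincomb :: "('m \<Rightarrow> 'a::ab_group_add) \<Rightarrow> ('m \<Rightarrow> int) \<Rightarrow> 'a" where
  "lincomb \<psi> u = (\<Sum>h\<in>{h. u h \<noteq> 0}. zsmul (u h) (\<psi> h))"

lemma lincomb_superset:
  "finite S \<Longrightarrow> {h. u h \<noteq> 0} \<subseteq> S \<Longrightarrow> lincomb \<psi> u = (\<Sum>h\<in>S. zsmul (u h) (\<psi> h))"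
  unfolding lincomb_def by (rule sum.mono_neutral_left) auto

lemma lincomb_add:
  assumes "finite {h. u h \<noteq> 0}" and "finite {h. v h \<noteq> 0}"
  shows "lincomb \<psi> (u + v) = lincomb \<psi> u + lincomb \<psi> v"
proof -
  let ?S = "{h. u h \<noteq> 0} \<union> {h. v h \<noteq> 0}"
  have "lincomb \<psi> (u + v) = (\<Sum>h\<in>?S. zsmul (u h) (\<psi> h)) + (\<Sum>h\<in>?S. zsmul (v h) (\<psi> h))"
    using assms by (subst lincomb_superset[where S = ?S]) (auto simp: zsmul_add_left sum.distrib)
  also have "\<dots> = lincomb \<psi> u + lincomb \<psi> v"
    using assms by (subst (1 2) lincomb_superset[where S = ?S]) auto
  finally show ?thesis .
qed

lemma lincomb_zero [simp]: "lincomb \<psi> 0 = 0"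
  by (simp add: lincomb_def)

lemma lincomb_diff: "lincomb (\<lambda>h. \<psi>\<^sub>1 h - \<psi>\<^sub>2 h) u = lincomb \<psi>\<^sub>1 u - lincomb \<psi>\<^sub>2 u"
  by (simp add: lincomb_def zsmul_diff_right sum_subtractf)

lemma lincomb_cong: "(\<And>h. u h \<noteq> 0 \<Longrightarrow> \<psi>\<^sub>1 h = \<psi>\<^sub>2 h) \<Longrightarrow> lincomb \<psi>\<^sub>1 u = lincomb \<psi>\<^sub>2 u"
  by (simp add: lincomb_def)

lemma linext_eq_lincomb: "linext C X Y \<phi> = lincomb \<phi>"
  by (simp add: linext_def lincomb_def fun_eq_iff)

section \<open>Pointed categories with finite coproducts\<close>

locale pcat_cop =
  fixes C :: "('o, 'm) pcat"
  assumes pointed_cat_cop: "pointed_cat_cop C"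
begin

lemma cat_axioms:
  "\<forall>f g. Dom C g = Cod C f \<longrightarrow> Dom C (Comp C g f) = Dom C f \<and> Cod C (Comp C g f) = Cod C g"
  "\<forall>f g h. Dom C g = Cod C f \<longrightarrow> Dom C h = Cod C g \<longrightarrow>
     Comp C h (Comp C g f) = Comp C (Comp C h g) f"
  "\<forall>a. Ident C a \<in> hom C a a"
  "\<forall>f. Comp C f (Ident C (Dom C f)) = f \<and> Comp C (Ident C (Cod C f)) f = f"
  "\<forall>a. \<exists>!f. f \<in> hom C (Zero C) a"
  "\<forall>a. \<exists>!f. f \<in> hom C a (Zero C)"
  "\<forall>a b. In1 C a b \<in> hom C a (Cop C a b) \<and> In2 C a b \<in> hom C b (Cop C a b)"
  "\<forall>a b c f g. f \<in> hom C a c \<longrightarrow> g \<in> hom C b c \<longrightarrow>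
     (\<exists>!h. h \<in> hom C (Cop C a b) c \<and> Comp C h (In1 C a b) = f \<and> Comp C h (In2 C a b) = g)"
  using pointed_cat_cop unfolding pointed_cat_cop_def by simp_all

lemma dom_comp: "Dom C g = Cod C f \<Longrightarrow> Dom C (Comp C g f) = Dom C f"
  and cod_comp: "Dom C g = Cod C f \<Longrightarrow> Cod C (Comp C g f) = Cod C g"
  using cat_axioms(1) by blast+

lemma comp_assoc:
  "Dom C g = Cod C f \<Longrightarrow> Dom C h = Cod C g \<Longrightarrow> Comp C h (Comp C g f) = Comp C (Comp C h g) f"
  using cat_axioms(2) by blast

lemma dom_Ident [simp]: "Dom C (Ident C a) = a" and cod_Ident [simp]: "Cod C (Ident C a) = a"
  using cat_axioms(3) unfolding hom_def by auto

lemma comp_Ident_left: "Cod C f = b \<Longrightarrow> Comp C (Ident C b) f = f"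
  and comp_Ident_right: "Dom C f = a \<Longrightarrow> Comp C f (Ident C a) = f"
  using cat_axioms(4) by blast+

lemma initial_Zero: "\<exists>!f. f \<in> hom C (Zero C) a"
  and terminal_Zero: "\<exists>!f. f \<in> hom C a (Zero C)"
  using cat_axioms(5,6) by blast+

lemma dom_zmor: "Dom C (zmor C a b) = a" and cod_zmor: "Cod C (zmor C a b) = b"
  using theI'[OF initial_Zero, of b] theI'[OF terminal_Zero, of a]
  unfolding zmor_def hom_def by (auto simp: dom_comp cod_comp)

lemma comp_zmor_left: "Dom C g = b \<Longrightarrow> Comp C g (zmor C a b) = zmor C a (Cod C g)"
proof -
  assume g: "Dom C g = b"
  let ?i = "THE h. h \<in> hom C (Zero C) b" and ?t = "THE h. h \<in> hom C a (Zero C)"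
  have i: "?i \<in> hom C (Zero C) b" and t: "?t \<in> hom C a (Zero C)"
    using theI'[OF initial_Zero] theI'[OF terminal_Zero] by blast+
  have "Comp C g (Comp C ?i ?t) = Comp C (Comp C g ?i) ?t"
    using i t g by (intro comp_assoc) (auto simp: hom_def)
  moreover have "Comp C g ?i = (THE h. h \<in> hom C (Zero C) (Cod C g))"
    using i g by (intro the1_equality[OF initial_Zero, symmetric]) (auto simp: hom_def dom_comp cod_comp)
  ultimately show ?thesis unfolding zmor_def by simp
qed

lemma comp_zmor_right: "Cod C f = a \<Longrightarrow> Comp C (zmor C a b) f = zmor C (Dom C f) b"
proof -
  assume f: "Cod C f = a"
  let ?i = "THE h. h \<in> hom C (Zero C) b" and ?t = "THE h. h \<in> hom C a (Zero C)"
  have i: "?i \<in> hom C (Zero C) b" and t: "?t \<in> hom C a (Zero C)"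
    using theI'[OF initial_Zero] theI'[OF terminal_Zero] by blast+
  have "Comp C (Comp C ?i ?t) f = Comp C ?i (Comp C ?t f)"
    using i t f by (intro comp_assoc[symmetric]) (auto simp: hom_def)
  moreover have "Comp C ?t f = (THE h. h \<in> hom C (Dom C f) (Zero C))"
    using t f by (intro the1_equality[OF terminal_Zero, symmetric]) (auto simp: hom_def dom_comp cod_comp)
  ultimately show ?thesis unfolding zmor_def by simp
qed

lemma dom_In1: "Dom C (In1 C a b) = a" and cod_In1: "Cod C (In1 C a b) = Cop C a b"
  and dom_In2: "Dom C (In2 C a b) = b" and cod_In2: "Cod C (In2 C a b) = Cop C a b"
  using cat_axioms(7) unfolding hom_def by auto

lemma coproduct_universal:
  "f \<in> hom C a c \<Longrightarrow> g \<in> hom C b c \<Longrightarrow>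
   \<exists>!h. h \<in> hom C (Cop C a b) c \<and> Comp C h (In1 C a b) = f \<and> Comp C h (In2 C a b) = g"
  using cat_axioms(8) by blast

lemma copair_unique:
  assumes "Cod C f = Cod C g" and "h \<in> hom C (Cop C (Dom C f) (Dom C g)) (Cod C f)"
    and "Comp C h (In1 C (Dom C f) (Dom C g)) = f" and "Comp C h (In2 C (Dom C f) (Dom C g)) = g"
  shows "h = copair C f g"
  unfolding copair_def
  by (rule the1_equality[OF coproduct_universal, symmetric]) (use assms in \<open>auto simp: hom_def\<close>)

lemma copair:
  assumes "Cod C f = Cod C g"
  shows dom_copair: "Dom C (copair C f g) = Cop C (Dom C f) (Dom C g)"
    and cod_copair: "Cod C (copair C f g) = Cod C f"
    and copair_In1: "Dom C f = a \<Longrightarrow> Dom C g = b \<Longrightarrow> Comp C (copair C f g) (In1 C a b) = f"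
    and copair_In2: "Dom C f = a \<Longrightarrow> Dom C g = b \<Longrightarrow> Comp C (copair C f g) (In2 C a b) = g"
proof -
  have "copair C f g \<in> hom C (Cop C (Dom C f) (Dom C g)) (Cod C f) \<and>
      Comp C (copair C f g) (In1 C (Dom C f) (Dom C g)) = f \<and>
      Comp C (copair C f g) (In2 C (Dom C f) (Dom C g)) = g"
    unfolding copair_def by (rule theI'[OF coproduct_universal]) (use assms in \<open>auto simp: hom_def\<close>)
  then show "Dom C (copair C f g) = Cop C (Dom C f) (Dom C g)" "Cod C (copair C f g) = Cod C f"
    "Dom C f = a \<Longrightarrow> Dom C g = b \<Longrightarrow> Comp C (copair C f g) (In1 C a b) = f"
    "Dom C f = a \<Longrightarrow> Dom C g = b \<Longrightarrow> Comp C (copair C f g) (In2 C a b) = g"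
    unfolding hom_def by auto
qed

lemma comp_copair:
  assumes k: "Dom C k = Cod C f" and fg: "Cod C f = Cod C g"
  shows "Comp C k (copair C f g) = copair C (Comp C k f) (Comp C k g)"
  by (rule copair_unique)
     (use k fg in \<open>simp_all add: hom_def dom_comp cod_comp dom_copair cod_copair
        cod_In1 cod_In2 copair_In1 copair_In2 comp_assoc[symmetric]\<close>)

lemma copair_In1_In2: "copair C (In1 C a b) (In2 C a b) = Ident C (Cop C a b)"
  by (rule copair_unique[symmetric])
     (auto simp: hom_def dom_In1 cod_In1 dom_In2 cod_In2 dom_Ident cod_Ident comp_Ident_left)

lemma copair_zmor: "copair C (zmor C a c) (zmor C b c) = zmor C (Cop C a b) c"
  by (rule copair_unique[symmetric])
     (auto simp: hom_def dom_zmor cod_zmor comp_zmor_right dom_In1 cod_In1 dom_In2 cod_In2)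

lemmas cat_simps = dom_comp cod_comp comp_assoc dom_Ident cod_Ident comp_Ident_left
  comp_Ident_right dom_zmor cod_zmor comp_zmor_left comp_zmor_right dom_In1 cod_In1 dom_In2
  cod_In2 dom_copair cod_copair copair_In1 copair_In2 comp_copair copair_In1_In2 copair_zmor

definition cop_assoc :: "'o \<Rightarrow> 'm" where
  "cop_assoc Y = copair C (Comp C (In1 C (Cop C Y Y) Y) (In1 C Y Y))
      (copair C (Comp C (In1 C (Cop C Y Y) Y) (In2 C Y Y)) (In2 C (Cop C Y Y) Y))"

lemmas structure_defs = fold2_def fold3_def ret1_def ret2_def cmap_def cop_assoc_def

lemma dom_cod_structure_maps [simp]:
  "Dom C (fold2 C Y) = Cop C Y Y" "Cod C (fold2 C Y) = Y"
  "Dom C (fold3 C Y) = Cop C (Cop C Y Y) Y" "Cod C (fold3 C Y) = Y"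
  "Dom C (ret1 C a b) = Cop C a b" "Cod C (ret1 C a b) = a"
  "Dom C (ret2 C a b) = Cop C a b" "Cod C (ret2 C a b) = b"
  "Dom C (cop_assoc Y) = Cop C Y (Cop C Y Y)" "Cod C (cop_assoc Y) = Cop C (Cop C Y Y) Y"
  "Dom C (cmap C f g) = Cop C (Dom C f) (Dom C g)" "Cod C (cmap C f g) = Cop C (Cod C f) (Cod C g)"
  by (simp_all add: structure_defs cat_simps)

lemma fold2_comp_fold2_Ident: "Comp C (fold2 C Y) (cmap C (fold2 C Y) (Ident C Y)) = fold3 C Y"
  and fold2_comp_Ident_fold2:
    "Comp C (fold2 C Y) (cmap C (Ident C Y) (fold2 C Y)) = Comp C (fold3 C Y) (cop_assoc Y)"
  and ret1_comp_fold2_Ident: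
    "Comp C (ret1 C Y Y) (cmap C (fold2 C Y) (Ident C Y)) = Comp C (fold2 C Y) (ret1 C (Cop C Y Y) Y)"
  and ret2_comp_fold2_Ident:
    "Comp C (ret2 C Y Y) (cmap C (fold2 C Y) (Ident C Y)) = ret2 C (Cop C Y Y) Y"
  and ret1_comp_Ident_fold2:
    "Comp C (ret1 C Y Y) (cmap C (Ident C Y) (fold2 C Y)) = ret1 C Y (Cop C Y Y)"
  and ret2_comp_Ident_fold2:
    "Comp C (ret2 C Y Y) (cmap C (Ident C Y) (fold2 C Y)) = Comp C (fold2 C Y) (ret2 C Y (Cop C Y Y))"
  unfolding structure_defs by (simp_all add: cat_simps)

lemma ret1_comp_cop_assoc:
    "Comp C (ret1 C (Cop C Y Y) Y) (cop_assoc Y) = cmap C (Ident C Y) (ret1 C Y Y)"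
  and ret2_comp_cop_assoc:
    "Comp C (ret2 C (Cop C Y Y) Y) (cop_assoc Y) = Comp C (ret2 C Y Y) (ret2 C Y (Cop C Y Y))"
  and ret1_Ident_comp_cop_assoc:
    "Comp C (cmap C (ret1 C Y Y) (Ident C Y)) (cop_assoc Y) = cmap C (Ident C Y) (ret2 C Y Y)"
  and ret2_Ident_comp_cop_assoc:
    "Comp C (cmap C (ret2 C Y Y) (Ident C Y)) (cop_assoc Y) = ret2 C Y (Cop C Y Y)"
  unfolding structure_defs by (simp_all add: cat_simps)

end

section \<open>The functor \<open>U\<^sub>X\<close>\<close>

lemma finite_support_UX: "u \<in> UX C X Z \<Longrightarrow> finite {h. u h \<noteq> 0}"
  unfolding UX_def by blast

lemma support_UX:
  "u \<in> UX C X Z \<Longrightarrow> u h \<noteq> 0 \<Longrightarrow> Dom C h = X \<and> Cod C h = Z \<and> h \<noteq> zmor C X Z"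
  unfolding UX_def hom_def by blast

lemma add_subgroup_UX: "add_subgroup (UX C X Z)"
  unfolding add_subgroup_def
proof (intro conjI ballI)
  fix u v assume u: "u \<in> UX C X Z" and v: "v \<in> UX C X Z"
  have "{h. (u + v) h \<noteq> 0} \<subseteq> {h. u h \<noteq> 0} \<union> {h. v h \<noteq> 0}" by auto
  then have "finite {h. (u + v) h \<noteq> 0}"
    using finite_support_UX[OF u] finite_support_UX[OF v] by (meson finite_Un finite_subset)
  moreover have "(u + v) h \<noteq> 0 \<Longrightarrow> h \<in> hom C X Z \<and> h \<noteq> zmor C X Z" for h
    using u v unfolding UX_def by (cases "u h = 0") auto
  ultimately show "u + v \<in> UX C X Z" unfolding UX_def by blast
qed (simp_all add: UX_def)

lemma additive_on_lincomb: "additive_on (UX C X Z) (lincomb \<psi>)"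
  unfolding additive_on_def by (simp add: lincomb_add finite_support_UX)

lemma Umap_eq_lincomb:
  assumes "finite {h. u h \<noteq> 0}"
  shows "Umap C X f u g =
    (if g \<in> hom C X (Cod C f) \<and> g \<noteq> zmor C X (Cod C f)
     then lincomb (\<lambda>h. if Comp C f h = g then 1 else 0) u else 0)"
proof -
  have "{h. u h \<noteq> 0 \<and> Comp C f h = g} = {h \<in> {h. u h \<noteq> 0}. Comp C f h = g}" by auto
  then have "(\<Sum>h\<in>{h. u h \<noteq> 0 \<and> Comp C f h = g}. u h)
      = (\<Sum>h\<in>{h. u h \<noteq> 0}. if Comp C f h = g then u h else 0)"
    using sum.inter_filter[OF assms] by simp
  also have "\<dots> = lincomb (\<lambda>h. if Comp C f h = g then 1 else 0) u"
    unfolding lincomb_def by (rule sum.cong) (auto simp: zsmul_one_int)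
  finally show ?thesis unfolding Umap_def by simp
qed

lemma Umap_zero [simp]: "Umap C X f 0 = 0"
  by (simp add: Umap_def fun_eq_iff)

lemma additive_on_Umap: "additive_on (UX C X Z) (Umap C X f)"
  unfolding additive_on_def
proof (intro ballI)
  fix u v assume u: "u \<in> UX C X Z" and v: "v \<in> UX C X Z"
  note fin = finite_support_UX[OF u] finite_support_UX[OF v]
    finite_support_UX[OF add_subgroup_add[OF add_subgroup_UX u v]]
  show "Umap C X f (u + v) = Umap C X f u + Umap C X f v"
  proof
    fix g
    show "Umap C X f (u + v) g = (Umap C X f u + Umap C X f v) g"
      by (simp only: Umap_eq_lincomb[OF fin(3)] lincomb_add[OF fin(1,2)])
        (simp add: Umap_eq_lincomb[OF fin(1)] Umap_eq_lincomb[OF fin(2)])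
  qed
qed

lemma support_Umap: "Umap C X f u g \<noteq> 0 \<Longrightarrow> \<exists>h. u h \<noteq> 0 \<and> Comp C f h = g"
proof (rule ccontr)
  assume "\<not> (\<exists>h. u h \<noteq> 0 \<and> Comp C f h = g)"
  then have "{h. u h \<noteq> 0 \<and> Comp C f h = g} = {}" by blast
  then have "Umap C X f u g = 0" unfolding Umap_def by (simp only: sum.empty if_cancel)
  moreover assume "Umap C X f u g \<noteq> 0"
  ultimately show False by contradiction
qed

lemma Umap_UX:
  assumes u: "u \<in> UX C X Z"
  shows "Umap C X f u \<in> UX C X (Cod C f)"
proof -
  have "{g. Umap C X f u g \<noteq> 0} \<subseteq> Comp C f ` {h. u h \<noteq> 0}"
    by (force dest: support_Umap)
  then have "finite {g. Umap C X f u g \<noteq> 0}"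
    using finite_surj[OF finite_support_UX[OF u]] by blast
  moreover have "Umap C X f u g \<noteq> 0 \<Longrightarrow> g \<in> hom C X (Cod C f) \<and> g \<noteq> zmor C X (Cod C f)" for g
    unfolding Umap_def by (cases "g \<in> hom C X (Cod C f) \<and> g \<noteq> zmor C X (Cod C f)") simp_all
  ultimately show ?thesis unfolding UX_def by blast
qed

context pcat_cop
begin

lemma lincomb_Umap:
  assumes u: "u \<in> UX C X Z" and f: "Dom C f = Z" and \<psi>: "\<psi> (zmor C X (Cod C f)) = 0"
  shows "lincomb \<psi> (Umap C X f u) = lincomb (\<lambda>h. \<psi> (Comp C f h)) u"
proof -
  let ?S = "{h. u h \<noteq> 0}"
  let ?T = "Comp C f ` ?S"
  have finS: "finite ?S" by (rule finite_support_UX[OF u])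
  have "lincomb \<psi> (Umap C X f u) = (\<Sum>g\<in>?T. zsmul (Umap C X f u g) (\<psi> g))"
    using finS by (intro lincomb_superset) (force dest: support_Umap)+
  also have "\<dots> = (\<Sum>g\<in>?T. \<Sum>h\<in>{h \<in> ?S. Comp C f h = g}. zsmul (u h) (\<psi> (Comp C f h)))"
  proof (rule sum.cong[OF refl])
    fix g assume "g \<in> ?T"
    then obtain h where h: "u h \<noteq> 0" "g = Comp C f h" by blast
    then have g: "g \<in> hom C X (Cod C f)"
      using support_UX[OF u h(1)] f by (simp add: hom_def dom_comp cod_comp)
    show "zsmul (Umap C X f u g) (\<psi> g) = (\<Sum>h\<in>{h \<in> ?S. Comp C f h = g}. zsmul (u h) (\<psi> (Comp C f h)))"
    proof (cases "g = zmor C X (Cod C f)")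
      case False
      then have "Umap C X f u g = (\<Sum>h\<in>{h \<in> ?S. Comp C f h = g}. u h)"
        using g unfolding Umap_def by (simp add: conj_commute)
      then show ?thesis by (simp add: zsmul_sum_left)
    qed (use \<psi> in simp) \<comment> \<open>\<open>U\<^sub>X(f)\<close> discards the zero morphism: this is where \<open>\<psi>(0) = 0\<close> enters\<close>
  qed
  also have "\<dots> = lincomb (\<lambda>h. \<psi> (Comp C f h)) u"
    unfolding lincomb_def by (rule sum.image_gen[OF finS, symmetric])
  finally show ?thesis .
qed

lemma Umap_comp:
  assumes u: "u \<in> UX C X Z" and f: "Dom C f = Z" and g: "Dom C g = Cod C f"
  shows "Umap C X g (Umap C X f u) = Umap C X (Comp C g f) u"
proof
  fix k
  have fu: "finite {h. Umap C X f u h \<noteq> 0}"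
    by (rule finite_support_UX[OF Umap_UX[OF u]])
  show "Umap C X g (Umap C X f u) k = Umap C X (Comp C g f) u k"
  proof (cases "k \<in> hom C X (Cod C g) \<and> k \<noteq> zmor C X (Cod C g)")
    case True
    have "Umap C X g (Umap C X f u) k = lincomb (\<lambda>h. if Comp C g h = k then 1 else 0) (Umap C X f u)"
      using True by (simp add: Umap_eq_lincomb[OF fu])
    also have "\<dots> = lincomb (\<lambda>h. if Comp C g (Comp C f h) = k then 1 else 0) u"
      using True g by (intro lincomb_Umap[OF u f]) (auto simp: comp_zmor_left)
    also have "\<dots> = lincomb (\<lambda>h. if Comp C (Comp C g f) h = k then 1 else 0) u"
      using support_UX[OF u] f g by (intro lincomb_cong) (simp add: comp_assoc)
    also have "\<dots> = Umap C X (Comp C g f) u k"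
      using True g by (simp add: Umap_eq_lincomb[OF finite_support_UX[OF u]] cod_comp)
    finally show ?thesis .
  next
    case False
    then show ?thesis
      using g by (auto simp: Umap_eq_lincomb[OF fu] Umap_eq_lincomb[OF finite_support_UX[OF u]] cod_comp)
  qed
qed

lemma Umap_Umap_eq_zero:
  assumes u: "u \<in> UX C X Z" and "Dom C f = Z" "Dom C g = Cod C f"
    and "Comp C g f = h" and "Umap C X h u = 0"
  shows "Umap C X g (Umap C X f u) = 0"
  using assms Umap_comp[OF u] by simp

lemma Umap_Umap_eq_zero_through:
  assumes u: "u \<in> UX C X Z" and "Dom C f = Z" "Dom C g = Cod C f" "Dom C h = Z" "Dom C k = Cod C h"
    and "Comp C g f = Comp C k h" and "Umap C X h u = 0"
  shows "Umap C X g (Umap C X f u) = 0"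
proof -
  have "Umap C X g (Umap C X f u) = Umap C X (Comp C k h) u"
    using assms Umap_comp[OF u] by simp
  also have "\<dots> = 0"
    using assms Umap_comp[OF u, of h k] by simp
  finally show ?thesis .
qed

end

section \<open>Cross effects and the kernels of \<open>t\<^sub>1\<^sub>1\<close> and \<open>t\<^sub>2\<close>\<close>

lemma UX_cr2U: "u \<in> cr2U C X Y \<Longrightarrow> u \<in> UX C X (Cop C Y Y)"
  unfolding cr2U_def by blast

lemma add_subgroup_cr2U: "add_subgroup (cr2U C X Y)"
proof -
  have "add_subgroup {u \<in> UX C X (Cop C Y Y). \<forall>f \<in> Umap C X ` {ret1 C Y Y, ret2 C Y Y}. f u = 0}"
    by (rule add_subgroup_common_kernel[OF add_subgroup_UX]) (auto simp: additive_on_Umap)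
  then show ?thesis unfolding cr2U_def by simp
qed

lemma add_subgroup_cr3U: "add_subgroup (cr3U C X Y)"
proof -
  have "add_subgroup {u \<in> UX C X (Cop C (Cop C Y Y) Y). \<forall>f \<in> Umap C X ` {ret1 C (Cop C Y Y) Y,
      ret2 C (Cop C Y Y) Y, cmap C (ret1 C Y Y) (Ident C Y), cmap C (ret2 C Y Y) (Ident C Y)}. f u = 0}"
    by (rule add_subgroup_common_kernel[OF add_subgroup_UX]) (auto simp: additive_on_Umap)
  then show ?thesis unfolding cr3U_def by simp
qed

lemma add_subgroup_cr3U_right: "add_subgroup (cr3U_right C X Y)"
proof -
  have "add_subgroup {u \<in> UX C X (Cop C Y (Cop C Y Y)). \<forall>f \<in> Umap C X ` {ret1 C Y (Cop C Y Y),
      ret2 C Y (Cop C Y Y), cmap C (Ident C Y) (ret1 C Y Y), cmap C (Ident C Y) (ret2 C Y Y)}. f u = 0}"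
    by (rule add_subgroup_common_kernel[OF add_subgroup_UX]) (auto simp: additive_on_Umap)
  then show ?thesis unfolding cr3U_right_def by simp
qed

lemma cr2phi_eq_lincomb:
  "cr2phi C X Y \<phi> = lincomb (\<lambda>\<xi>. \<phi> (Comp C (fold2 C Y) \<xi>) - \<phi> (Comp C (ret1 C Y Y) \<xi>)
      - \<phi> (Comp C (ret2 C Y Y) \<xi>))"
  by (simp add: cr2phi_def lincomb_def fun_eq_iff)

lemma additive_on_cr2phi: "additive_on (cr2U C X Y) (cr2phi C X Y \<phi>)"
  unfolding cr2phi_eq_lincomb
  by (rule additive_on_subset[OF additive_on_lincomb]) (auto simp: cr2U_def)

context pcat_cop
begin

lemma cr2phi_cr2U:
  assumes u: "u \<in> cr2U C X Y" and \<phi>: "\<phi> (zmor C X Y) = 0"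
  shows "cr2phi C X Y \<phi> u = linext C X Y \<phi> (Umap C X (fold2 C Y) u)"
proof -
  have r: "Umap C X (ret1 C Y Y) u = 0" "Umap C X (ret2 C Y Y) u = 0"
    using u unfolding cr2U_def by auto
  have push: "lincomb (\<lambda>\<xi>. \<phi> (Comp C g \<xi>)) u = lincomb \<phi> (Umap C X g u)"
    if "Dom C g = Cop C Y Y" "Cod C g = Y" for g
    using that \<phi> by (intro lincomb_Umap[OF UX_cr2U[OF u], symmetric]) simp_all
  show ?thesis
    unfolding cr2phi_eq_lincomb lincomb_diff linext_eq_lincomb
    by (simp add: push r)
qed

lemma Umap_fold2_Ident_cr3U:
  assumes a: "a \<in> cr3U C X Y"
  shows "Umap C X (cmap C (fold2 C Y) (Ident C Y)) a \<in> cr2U C X Y"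
proof -
  have aU: "a \<in> UX C X (Cop C (Cop C Y Y) Y)"
    and r: "Umap C X (ret1 C (Cop C Y Y) Y) a = 0" "Umap C X (ret2 C (Cop C Y Y) Y) a = 0"
    using a unfolding cr3U_def by auto
  have "Umap C X (ret1 C Y Y) (Umap C X (cmap C (fold2 C Y) (Ident C Y)) a) = 0"
    by (rule Umap_Umap_eq_zero_through[OF aU _ _ _ _ ret1_comp_fold2_Ident]) (use r in simp_all)
  moreover have "Umap C X (ret2 C Y Y) (Umap C X (cmap C (fold2 C Y) (Ident C Y)) a) = 0"
    by (rule Umap_Umap_eq_zero[OF aU _ _ ret2_comp_fold2_Ident]) (use r in simp_all)
  ultimately show ?thesis
    using Umap_UX[OF aU, of "cmap C (fold2 C Y) (Ident C Y)"] unfolding cr2U_def by simp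
qed

lemma Umap_Ident_fold2_cr3U_right:
  assumes b: "b \<in> cr3U_right C X Y"
  shows "Umap C X (cmap C (Ident C Y) (fold2 C Y)) b \<in> cr2U C X Y"
proof -
  have bU: "b \<in> UX C X (Cop C Y (Cop C Y Y))"
    and r: "Umap C X (ret1 C Y (Cop C Y Y)) b = 0" "Umap C X (ret2 C Y (Cop C Y Y)) b = 0"
    using b unfolding cr3U_right_def by auto
  have "Umap C X (ret1 C Y Y) (Umap C X (cmap C (Ident C Y) (fold2 C Y)) b) = 0"
    by (rule Umap_Umap_eq_zero[OF bU _ _ ret1_comp_Ident_fold2]) (use r in simp_all)
  moreover have "Umap C X (ret2 C Y Y) (Umap C X (cmap C (Ident C Y) (fold2 C Y)) b) = 0"
    by (rule Umap_Umap_eq_zero_through[OF bU _ _ _ _ ret2_comp_Ident_fold2]) (use r in simp_all)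
  ultimately show ?thesis
    using Umap_UX[OF bU, of "cmap C (Ident C Y) (fold2 C Y)"] unfolding cr2U_def by simp
qed

lemma Umap_cop_assoc_cr3U_right:
  assumes b: "b \<in> cr3U_right C X Y"
  shows "Umap C X (cop_assoc Y) b \<in> cr3U C X Y"
proof -
  have bU: "b \<in> UX C X (Cop C Y (Cop C Y Y))"
    and r: "Umap C X (ret1 C Y (Cop C Y Y)) b = 0" "Umap C X (ret2 C Y (Cop C Y Y)) b = 0"
      "Umap C X (cmap C (Ident C Y) (ret1 C Y Y)) b = 0"
      "Umap C X (cmap C (Ident C Y) (ret2 C Y Y)) b = 0"
    using b unfolding cr3U_right_def by auto
  have "Umap C X (ret1 C (Cop C Y Y) Y) (Umap C X (cop_assoc Y) b) = 0"
    by (rule Umap_Umap_eq_zero[OF bU _ _ ret1_comp_cop_assoc]) (use r in simp_all)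
  moreover have "Umap C X (ret2 C (Cop C Y Y) Y) (Umap C X (cop_assoc Y) b) = 0"
    by (rule Umap_Umap_eq_zero_through[OF bU _ _ _ _ ret2_comp_cop_assoc]) (use r in simp_all)
  moreover have "Umap C X (cmap C (ret1 C Y Y) (Ident C Y)) (Umap C X (cop_assoc Y) b) = 0"
    by (rule Umap_Umap_eq_zero[OF bU _ _ ret1_Ident_comp_cop_assoc]) (use r in simp_all)
  moreover have "Umap C X (cmap C (ret2 C Y Y) (Ident C Y)) (Umap C X (cop_assoc Y) b) = 0"
    by (rule Umap_Umap_eq_zero[OF bU _ _ ret2_Ident_comp_cop_assoc]) (use r in simp_all)
  ultimately show ?thesis
    using Umap_UX[OF bU, of "cop_assoc Y"] unfolding cr3U_def by simp
qed

lemma T11ker_subset_cr2U: "T11ker C X Y \<subseteq> cr2U C X Y"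
proof
  fix n assume "n \<in> T11ker C X Y"
  then obtain a b where "a \<in> cr3U C X Y" "b \<in> cr3U_right C X Y"
    and "n = Umap C X (cmap C (fold2 C Y) (Ident C Y)) a + Umap C X (cmap C (Ident C Y) (fold2 C Y)) b"
    unfolding T11ker_def by blast
  then show "n \<in> cr2U C X Y"
    by (simp add: add_subgroup_add[OF add_subgroup_cr2U] Umap_fold2_Ident_cr3U
        Umap_Ident_fold2_cr3U_right)
qed

lemma add_subgroup_T11ker: "add_subgroup (T11ker C X Y)"
  unfolding T11ker_def
proof (intro add_subgroup_sums add_subgroup_image)
  show "additive_on (cr3U C X Y) (Umap C X (cmap C (fold2 C Y) (Ident C Y)))"
    by (rule additive_on_subset[OF additive_on_Umap[of C X "Cop C (Cop C Y Y) Y"]])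
      (auto simp: cr3U_def)
  show "additive_on (cr3U_right C X Y) (Umap C X (cmap C (Ident C Y) (fold2 C Y)))"
    by (rule additive_on_subset[OF additive_on_Umap[of C X "Cop C Y (Cop C Y Y)"]])
      (auto simp: cr3U_right_def)
qed (fact add_subgroup_cr3U add_subgroup_cr3U_right)+

lemma Umap_fold2_T11ker_generator:
  assumes a: "a \<in> cr3U C X Y" and b: "b \<in> cr3U_right C X Y"
  shows "Umap C X (fold2 C Y) (Umap C X (cmap C (fold2 C Y) (Ident C Y)) a
           + Umap C X (cmap C (Ident C Y) (fold2 C Y)) b)
         = Umap C X (fold3 C Y) (a + Umap C X (cop_assoc Y) b)"
proof -
  have aU: "a \<in> UX C X (Cop C (Cop C Y Y) Y)" using a unfolding cr3U_def by blast
  have bU: "b \<in> UX C X (Cop C Y (Cop C Y Y))" using b unfolding cr3U_right_def by blast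
  have "Umap C X (fold2 C Y) (Umap C X (cmap C (fold2 C Y) (Ident C Y)) a
           + Umap C X (cmap C (Ident C Y) (fold2 C Y)) b)
      = Umap C X (fold2 C Y) (Umap C X (cmap C (fold2 C Y) (Ident C Y)) a)
        + Umap C X (fold2 C Y) (Umap C X (cmap C (Ident C Y) (fold2 C Y)) b)"
    by (rule additive_onD[OF additive_on_Umap UX_cr2U UX_cr2U])
      (fact Umap_fold2_Ident_cr3U[OF a] Umap_Ident_fold2_cr3U_right[OF b])+
  also have "\<dots> = Umap C X (fold3 C Y) a + Umap C X (fold3 C Y) (Umap C X (cop_assoc Y) b)"
    using Umap_comp[OF aU, of "cmap C (fold2 C Y) (Ident C Y)" "fold2 C Y"]
      Umap_comp[OF bU, of "cmap C (Ident C Y) (fold2 C Y)" "fold2 C Y"]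
      Umap_comp[OF bU, of "cop_assoc Y" "fold3 C Y"]
    by (simp add: fold2_comp_fold2_Ident fold2_comp_Ident_fold2)
  also have "\<dots> = Umap C X (fold3 C Y) (a + Umap C X (cop_assoc Y) b)"
    using aU Umap_UX[OF bU, of "cop_assoc Y"]
    by (intro additive_onD[OF additive_on_Umap, symmetric]) simp_all
  finally show ?thesis .
qed

lemma Umap_fold2_image_T11ker: "Umap C X (fold2 C Y) ` T11ker C X Y = T2ker C X Y"
proof
  show "Umap C X (fold2 C Y) ` T11ker C X Y \<subseteq> T2ker C X Y"
  proof
    fix m assume "m \<in> Umap C X (fold2 C Y) ` T11ker C X Y"
    then obtain a b where a: "a \<in> cr3U C X Y" and b: "b \<in> cr3U_right C X Y"
      and "m = Umap C X (fold2 C Y) (Umap C X (cmap C (fold2 C Y) (Ident C Y)) a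
          + Umap C X (cmap C (Ident C Y) (fold2 C Y)) b)"
      unfolding T11ker_def by blast
    then have "m = Umap C X (fold3 C Y) (a + Umap C X (cop_assoc Y) b)"
      by (simp add: Umap_fold2_T11ker_generator)
    moreover have "a + Umap C X (cop_assoc Y) b \<in> cr3U C X Y"
      by (rule add_subgroup_add[OF add_subgroup_cr3U a Umap_cop_assoc_cr3U_right[OF b]])
    ultimately show "m \<in> T2ker C X Y" unfolding T2ker_def by blast
  qed
  show "T2ker C X Y \<subseteq> Umap C X (fold2 C Y) ` T11ker C X Y"
  proof
    fix m assume "m \<in> T2ker C X Y"
    then obtain a where a: "a \<in> cr3U C X Y" and m: "m = Umap C X (fold3 C Y) a"
      unfolding T2ker_def by blast
    have zero: "0 \<in> cr3U_right C X Y" by (rule add_subgroup_zero[OF add_subgroup_cr3U_right])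
    have "m = Umap C X (fold2 C Y) (Umap C X (cmap C (fold2 C Y) (Ident C Y)) a
        + Umap C X (cmap C (Ident C Y) (fold2 C Y)) 0)"
      using Umap_fold2_T11ker_generator[OF a zero] m by simp
    moreover have "Umap C X (cmap C (fold2 C Y) (Ident C Y)) a
        + Umap C X (cmap C (Ident C Y) (fold2 C Y)) 0 \<in> T11ker C X Y"
      unfolding T11ker_def using a zero by blast
    ultimately show "m \<in> Umap C X (fold2 C Y) ` T11ker C X Y" by blast
  qed
qed

lemma additive_on_T11ker_Umap_fold2: "additive_on (T11ker C X Y) (Umap C X (fold2 C Y))"
  by (rule additive_on_subset[OF additive_on_Umap[of C X "Cop C Y Y"]])
    (use T11ker_subset_cr2U in \<open>auto simp: cr2U_def\<close>)

lemma add_subgroup_T2ker: "add_subgroup (T2ker C X Y)"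
  unfolding Umap_fold2_image_T11ker[symmetric]
  by (rule add_subgroup_image[OF add_subgroup_T11ker additive_on_T11ker_Umap_fold2])

lemma T2ker_subset_UX: "T2ker C X Y \<subseteq> UX C X Y"
proof
  fix m assume "m \<in> T2ker C X Y"
  then obtain a where "a \<in> UX C X (Cop C (Cop C Y Y) Y)" and "m = Umap C X (fold3 C Y) a"
    unfolding T2ker_def cr3U_def by blast
  then show "m \<in> UX C X Y" using Umap_UX[of a C X _ "fold3 C Y"] by simp
qed

theorem quadratic_iff_factors_through_T2ker:
  assumes \<phi>: "\<phi> (zmor C X Y) = 0"
  shows "quadratic C X Y \<phi> \<longleftrightarrow> factors_through_quot (UX C X Y) (T2ker C X Y) (linext C X Y \<phi>)"
proof -
  have "quadratic C X Y \<phi> \<longleftrightarrow> (\<forall>n\<in>T11ker C X Y. cr2phi C X Y \<phi> n = 0)"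
    unfolding quadratic_def
    by (rule factors_through_quot_iff_vanishing[OF add_subgroup_cr2U add_subgroup_T11ker
          T11ker_subset_cr2U additive_on_cr2phi])
  also have "\<dots> \<longleftrightarrow> (\<forall>n\<in>T11ker C X Y. linext C X Y \<phi> (Umap C X (fold2 C Y) n) = 0)"
    by (intro ball_cong refl) (simp add: cr2phi_cr2U \<phi> subsetD[OF T11ker_subset_cr2U])
  also have "\<dots> \<longleftrightarrow> (\<forall>m\<in>T2ker C X Y. linext C X Y \<phi> m = 0)"
    unfolding Umap_fold2_image_T11ker[symmetric] by blast
  also have "\<dots> \<longleftrightarrow> factors_through_quot (UX C X Y) (T2ker C X Y) (linext C X Y \<phi>)"
    unfolding linext_eq_lincomb
    by (rule factors_through_quot_iff_vanishing[symmetric, OF add_subgroup_UX add_subgroup_T2ker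
          T2ker_subset_UX additive_on_lincomb])
  finally show ?thesis .
qed

end

theorem proposition2p10:
  fixes C :: "('o, 'm) pcat" and X Y :: 'o and \<phi> :: "'m \<Rightarrow> 'a::ab_group_add"
  assumes "pointed_cat_cop C"
    and "\<phi> (zmor C X Y) = 0"
  shows "quadratic C X Y \<phi> \<longleftrightarrow>
         factors_through_quot (UX C X Y) (T2ker C X Y) (linext C X Y \<phi>)"
  by (rule pcat_cop.quadratic_iff_factors_through_T2ker[OF pcat_cop.intro]) (fact assms)+

end
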